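(* Consider the basic reproduction numbers $\mathcal{R}_1,\mathcal{R}_2$ described in the context, regarded as functions of the vector-bias parameters $p\ge l>0$ with all other data fixed. They depend on $(p,l)$ only through $q:=l/p\in(0,1]$; writing $\mathcal{R}_i(q)$, one has $$\mathcal{R}_i(q)=\frac{1}{\sqrt{q}}\,\mathcal{R}_i(1),\quad i=1,2,\qquad\text{and hence}\qquad \mathcal{R}_0(q):=\max\{\mathcal{R}_1(q),\mathcal{R}_2(q)\}=\frac{1}{\sqrt q}\max\{\mathcal{R}_1(1),\mathcal{R}_2(1)\},$$ where $\mathcal{R}_i(1)$ is the value when $l=p$. In particular $\mathcal{R}_0$ is decreasing in $q$.
   Context: Let $\Omega\subset\mathbb{R}^m$ be a bounded domain with smooth boundary; Neumann conditions throughout. Constants: $D_h,D_v>0$; $0<d<b$; $\gamma_1,\gamma_2>0$; positive constants $c_1,c_2,\alpha_1,\alpha_2$; $p\ge l>0$; $\omega>0$. $N(x)$ is the globally attractive positive steady state of $\partial_t N=D_h\Delta N+B(x,N)N-dN$ (Neumann), where $K>0$ is continuous on $\bar\Omega$ and $B(x,u)=b(1-u/K(x))$ for $0\le u\le K(x)$, $0$ otherwise. $\Lambda,\eta,\beta$: Hölder continuous, nonnegative, not identically zero on $\mathbb{R}\times\bar\Omega$, $\omega$-periodic in $t$; $M^*(t,x)$ is the globally stable positive $\omega$-periodic solution of $\partial_t M=D_v\Delta M+\Lambda-\eta M$ (Neumann). (Neither $N$ nor $M^*$ depends on $p,l$.) Let $E=C(\bar\Omega,\mathbb{R}^2)$,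 $C_\omega(\mathbb{R},E)$ the space of continuous $\omega$-periodic maps $\mathbb{R}\to E$ with max norm. For $i\in\{1,2\}$, $\Psi_i(t,s)$ is the evolution operator on $E$ of $\partial_t v_1=D_h\Delta v_1-(d+\gamma_i)v_1$, $\partial_t v_2=D_v\Delta v_2-\eta(t,x)v_2$ (Neumann); $\mathcal{F}_i(t)(\psi_1,\psi_2)=(c_i\beta(t,\cdot)\psi_2,\ \alpha_i\beta(t,\cdot)pM^*(t,\cdot)\psi_1/(lN(\cdot)))$; $[\mathcal{L}_iv](t)=\int_0^\infty\Psi_i(t,t-s)\mathcal{F}_i(t-s)v(t-s)ds$ on $C_\omega(\mathbb{R},E)$; $\mathcal{R}_i:=r(\mathcal{L}_i)$, the spectral radius. *)

theory Defs
  imports "HOL-Analysis.Analysis"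
begin

text \<open>Elements of E = C(closure Omega, R^2) are represented as functions
  'a => real * real; elements of C_omega(R,E) as functions real => 'a => real * real
  which are jointly continuous on R x closure Omega, omega-periodic in t, and
  (normalisation) vanish outside closure Omega.  On the compact set closure Omega,
  joint continuity is the same as continuity of t |-> v t in the sup norm of E.\<close>

definition Cw :: "'a::euclidean_space set \<Rightarrow> real \<Rightarrow> (real \<Rightarrow> 'a \<Rightarrow> real \<times> real) set" where
  "Cw \<Omega> \<omega> = {v. continuous_on (UNIV \<times> closure \<Omega>) (\<lambda>z. v (fst z) (snd z))
                 \<and> (\<forall>t. v (t + \<omega>) = v t)
                 \<and> (\<forall>t x. x \<notin> closure \<Omega> \<longrightarrow> v t x = 0)}"

text \<open>Evolution operator of the decoupled linear system: it acts componentwise,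
  U on the first (host) component and V on the second (vector) component.\<close>

definition Psi ::
  "(real \<Rightarrow> real \<Rightarrow> ('a \<Rightarrow> real) \<Rightarrow> ('a \<Rightarrow> real)) \<Rightarrow>
   (real \<Rightarrow> real \<Rightarrow> ('a \<Rightarrow> real) \<Rightarrow> ('a \<Rightarrow> real)) \<Rightarrow>
   real \<Rightarrow> real \<Rightarrow> ('a \<Rightarrow> real \<times> real) \<Rightarrow> ('a \<Rightarrow> real \<times> real)" where
  "Psi U V t s \<phi> = (\<lambda>x. (U t s (\<lambda>y. fst (\<phi> y)) x, V t s (\<lambda>y. snd (\<phi> y)) x))"

definition Fop ::
  "real \<Rightarrow> real \<Rightarrow> (real \<Rightarrow> 'a \<Rightarrow> real) \<Rightarrow> (real \<Rightarrow> 'a \<Rightarrow> real) \<Rightarrow> ('a \<Rightarrow> real) \<Rightarrow>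
   real \<Rightarrow> real \<Rightarrow> real \<Rightarrow> ('a \<Rightarrow> real \<times> real) \<Rightarrow> ('a \<Rightarrow> real \<times> real)" where
  "Fop c \<alpha> \<beta> Mstar N p l t \<psi> =
     (\<lambda>x. (c * \<beta> t x * snd (\<psi> x),
           \<alpha> * \<beta> t x * p * Mstar t x * fst (\<psi> x) / (l * N x)))"

definition Lop ::
  "'a::euclidean_space set \<Rightarrow>
   (real \<Rightarrow> real \<Rightarrow> ('a \<Rightarrow> real) \<Rightarrow> ('a \<Rightarrow> real)) \<Rightarrow>
   (real \<Rightarrow> real \<Rightarrow> ('a \<Rightarrow> real) \<Rightarrow> ('a \<Rightarrow> real)) \<Rightarrow>
   real \<Rightarrow> real \<Rightarrow> (real \<Rightarrow> 'a \<Rightarrow> real) \<Rightarrow> (real \<Rightarrow> 'a \<Rightarrow> real) \<Rightarrow> ('a \<Rightarrow> real) \<Rightarrow>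
   real \<Rightarrow> real \<Rightarrow> (real \<Rightarrow> 'a \<Rightarrow> real \<times> real) \<Rightarrow> (real \<Rightarrow> 'a \<Rightarrow> real \<times> real)" where
  "Lop \<Omega> U V c \<alpha> \<beta> Mstar N p l v =
     (\<lambda>t x. if x \<in> closure \<Omega> then
        (integral {0..} (\<lambda>s. fst (Psi U V t (t - s) (Fop c \<alpha> \<beta> Mstar N p l (t - s) (v (t - s))) x)),
         integral {0..} (\<lambda>s. snd (Psi U V t (t - s) (Fop c \<alpha> \<beta> Mstar N p l (t - s) (v (t - s))) x)))
      else 0)"

text \<open>Spectrum of a real-linear operator A on a real space X, via the
  complexification X + iX: z is in the spectrum iff z - A is not a bijection of X x X.\<close>

definition cspectrum ::
  "(real \<Rightarrow> 'a \<Rightarrow> real \<times> real) set \<Rightarrow>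
   ((real \<Rightarrow> 'a \<Rightarrow> real \<times> real) \<Rightarrow> (real \<Rightarrow> 'a \<Rightarrow> real \<times> real)) \<Rightarrow> complex set" where
  "cspectrum X A = {z. \<not> bij_betw
      (\<lambda>(u, w). (\<lambda>t x. Re z *\<^sub>R u t x - Im z *\<^sub>R w t x - A u t x,
                  \<lambda>t x. Im z *\<^sub>R u t x + Re z *\<^sub>R w t x - A w t x))
      (X \<times> X) (X \<times> X)}"

definition spectral_radius ::
  "(real \<Rightarrow> 'a \<Rightarrow> real \<times> real) set \<Rightarrow>
   ((real \<Rightarrow> 'a \<Rightarrow> real \<times> real) \<Rightarrow> (real \<Rightarrow> 'a \<Rightarrow> real \<times> real)) \<Rightarrow> real" where
  "spectral_radius X A = enn2real (SUP z \<in> cspectrum X A. ennreal (cmod z))"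

definition lin_op :: "(('a \<Rightarrow> real) \<Rightarrow> ('a \<Rightarrow> real)) \<Rightarrow> bool" where
  "lin_op T \<longleftrightarrow> (\<forall>a b f g. T (\<lambda>x. a * f x + b * g x) = (\<lambda>x. a * T f x + b * T g x))"

end

theory Submission
  imports Defs
begin

text \<open>Write D a b for the scaling (\<psi>1, \<psi>2) \<mapsto> (a \<psi>1, b \<psi>2) and L(p,l) for the
  next-generation operator. The bias enters only through the host-to-vector entry of F, so
  L(p,l) = D 1 (p/l) L(1,1); and since L is off-diagonal, L (D a b) = D b a L. With
  r = sqrt(p/l) this gives L(p,l) (D 1 r) = D r (r * r) L(1,1) = D 1 r (r L(1,1)), so L(p,l) is
  similar to r L(1,1). A diagonal similarity preserves the spectrum of the complexified
  operator and the factor r scales it, whence r(L(p,l)) = sqrt(p/l) r(L(1,1)).\<close>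

definition scale_comp :: "real \<Rightarrow> real \<Rightarrow> ('a \<Rightarrow> real \<times> real) \<Rightarrow> ('a \<Rightarrow> real \<times> real)" where
  "scale_comp a b \<phi> = (\<lambda>x. (a * fst (\<phi> x), b * snd (\<phi> x)))"

definition diag_scale :: "real \<Rightarrow> real \<Rightarrow> (real \<Rightarrow> 'a \<Rightarrow> real \<times> real) \<Rightarrow> (real \<Rightarrow> 'a \<Rightarrow> real \<times> real)" where
  "diag_scale a b v = (\<lambda>t. scale_comp a b (v t))"

lemma diag_scale_mult [simp]: "diag_scale a b (diag_scale c d v) = diag_scale (a * c) (b * d) v"
  by (simp add: diag_scale_def scale_comp_def mult.assoc)

lemma diag_scale_one [simp]: "diag_scale 1 1 = id"
  by (simp add: diag_scale_def scale_comp_def fun_eq_iff)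

lemma Cw_diag_scale:
  assumes "v \<in> Cw \<Omega> \<omega>"
  shows "diag_scale a b v \<in> Cw \<Omega> \<omega>"
proof -
  have cont: "continuous_on (UNIV \<times> closure \<Omega>) (\<lambda>z. v (fst z) (snd z))"
    and per: "\<And>t. v (t + \<omega>) = v t"
    and supp: "\<And>t x. x \<notin> closure \<Omega> \<Longrightarrow> v t x = 0"
    using assms by (simp_all add: Cw_def)
  have "continuous_on (UNIV \<times> closure \<Omega>)
      (\<lambda>z. (a * fst (v (fst z) (snd z)), b * snd (v (fst z) (snd z))))"
    by (intro continuous_intros cont)
  then show ?thesis
    unfolding Cw_def diag_scale_def scale_comp_def by (simp add: per supp zero_prod_def)
qed

lemma bij_betw_diag_scale:
  assumes "\<And>a b v. v \<in> X \<Longrightarrow> diag_scale a b v \<in> X" and "a \<noteq> 0" and "b \<noteq> 0"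
  shows "bij_betw (diag_scale a b) X X"
proof (rule bij_betwI[where g = "diag_scale (1 / a) (1 / b)"])
  show "diag_scale a b \<in> X \<rightarrow> X" and "diag_scale (1 / a) (1 / b) \<in> X \<rightarrow> X"
    using assms(1) by auto
  show "diag_scale (1 / a) (1 / b) (diag_scale a b v) = v"
    and "diag_scale a b (diag_scale (1 / a) (1 / b) v) = v" for v
    using assms(2,3) by simp_all
qed

definition cshift ::
  "((real \<Rightarrow> 'a \<Rightarrow> real \<times> real) \<Rightarrow> (real \<Rightarrow> 'a \<Rightarrow> real \<times> real)) \<Rightarrow> complex \<Rightarrow>
   (real \<Rightarrow> 'a \<Rightarrow> real \<times> real) \<times> (real \<Rightarrow> 'a \<Rightarrow> real \<times> real) \<Rightarrow>
   (real \<Rightarrow> 'a \<Rightarrow> real \<times> real) \<times> (real \<Rightarrow> 'a \<Rightarrow> real \<times> real)" where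
  "cshift A z = (\<lambda>(u, w). (\<lambda>t x. Re z *\<^sub>R u t x - Im z *\<^sub>R w t x - A u t x,
                            \<lambda>t x. Im z *\<^sub>R u t x + Re z *\<^sub>R w t x - A w t x))"

lemma cspectrum_eq_cshift: "cspectrum X A = {z. \<not> bij_betw (cshift A z) (X \<times> X) (X \<times> X)}"
  by (simp add: cspectrum_def cshift_def)

lemma cshift_diag_similar:
  assumes "r > 0" and "\<And>u. A (diag_scale 1 r u) = diag_scale r (r * r) (B u)"
  shows "cshift A z (map_prod (diag_scale 1 r) (diag_scale 1 r) q)
       = map_prod (diag_scale r (r * r)) (diag_scale r (r * r)) (cshift B (z / of_real r) q)"
proof (cases q)
  case (Pair u w)
  have "cshift A z (map_prod (diag_scale 1 r) (diag_scale 1 r) q) =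
     (\<lambda>t x. Re z *\<^sub>R diag_scale 1 r u t x - Im z *\<^sub>R diag_scale 1 r w t x
              - diag_scale r (r * r) (B u) t x,
      \<lambda>t x. Im z *\<^sub>R diag_scale 1 r u t x + Re z *\<^sub>R diag_scale 1 r w t x
              - diag_scale r (r * r) (B w) t x)"
    by (simp add: Pair cshift_def assms(2))
  also have "\<dots> = map_prod (diag_scale r (r * r)) (diag_scale r (r * r)) (cshift B (z / of_real r) q)"
    using assms(1)
    by (simp add: Pair cshift_def diag_scale_def scale_comp_def fun_eq_iff
        right_diff_distrib distrib_left)
  finally show ?thesis .
qed

text \<open>The hypothesis says A = D (r B) D\<inverse> with D = diag_scale 1 r.\<close>

lemma cspectrum_diag_similar:
  assumes X: "\<And>a b v. v \<in> X \<Longrightarrow> diag_scale a b v \<in> X"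
    and r: "r > 0" and AB: "\<And>u. A (diag_scale 1 r u) = diag_scale r (r * r) (B u)"
  shows "cspectrum X A = (\<lambda>z. of_real r * z) ` cspectrum X B"
proof -
  let ?P = "\<lambda>a b. map_prod (diag_scale a b) (diag_scale a b)"
  have P: "bij_betw (?P a b) (X \<times> X) (X \<times> X)" if "a \<noteq> 0" "b \<noteq> 0" for a b
    using bij_betw_diag_scale[OF X that] bij_betw_diag_scale[OF X that]
    by (rule bij_betw_map_prod)
  have P_mult: "?P a b (?P c d q) = ?P (a * c) (b * d) q" for a b c d q
    by (cases q) simp
  have sandwich: "bij_betw (?P a b \<circ> g \<circ> ?P c d) (X \<times> X) (X \<times> X)"
    if "bij_betw g (X \<times> X) (X \<times> X)" "a \<noteq> 0" "b \<noteq> 0" "c \<noteq> 0" "d \<noteq> 0" for g a b c d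
    using bij_betw_trans[OF bij_betw_trans[OF P[OF that(4,5)] that(1)] P[OF that(2,3)]]
    by (simp only: o_assoc)
  note conj = cshift_diag_similar[of r A B, OF r AB]
  have bij_iff: "bij_betw (cshift A z) (X \<times> X) (X \<times> X) \<longleftrightarrow>
        bij_betw (cshift B (z / of_real r)) (X \<times> X) (X \<times> X)" for z
  proof
    have "cshift B (z / of_real r) q = (?P (1 / r) (1 / (r * r)) \<circ> cshift A z \<circ> ?P 1 r) q" for q
      using r by (simp add: conj P_mult prod.map_id0)
    then have "cshift B (z / of_real r) = ?P (1 / r) (1 / (r * r)) \<circ> cshift A z \<circ> ?P 1 r" ..
    then show "bij_betw (cshift B (z / of_real r)) (X \<times> X) (X \<times> X)"
      if "bij_betw (cshift A z) (X \<times> X) (X \<times> X)"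
      using sandwich[OF that] r by simp
  next
    have "cshift A z q = (?P r (r * r) \<circ> cshift B (z / of_real r) \<circ> ?P 1 (1 / r)) q" for q
      using conj[of z "?P 1 (1 / r) q"] r by (simp add: P_mult prod.map_id0)
    then have "cshift A z = ?P r (r * r) \<circ> cshift B (z / of_real r) \<circ> ?P 1 (1 / r)" ..
    then show "bij_betw (cshift A z) (X \<times> X) (X \<times> X)"
      if "bij_betw (cshift B (z / of_real r)) (X \<times> X) (X \<times> X)"
      using sandwich[OF that] r by simp
  qed
  have mem_image: "z \<in> (\<lambda>z. of_real r * z) ` S \<longleftrightarrow> z / of_real r \<in> S" for z :: complex and S
  proof
    show "z \<in> (\<lambda>z. of_real r * z) ` S" if "z / of_real r \<in> S"
      using that r by (intro image_eqI[where x = "z / of_real r"]) auto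
  qed (use r in auto)
  show ?thesis
    by (rule set_eqI) (simp add: cspectrum_eq_cshift bij_iff mem_image)
qed

lemma spectral_radius_diag_similar:
  assumes "\<And>a b v. v \<in> X \<Longrightarrow> diag_scale a b v \<in> X"
    and "r > 0" and "\<And>u. A (diag_scale 1 r u) = diag_scale r (r * r) (B u)"
  shows "spectral_radius X A = r * spectral_radius X B"
proof -
  have "cspectrum X A = (\<lambda>z. of_real r * z) ` cspectrum X B"
    by (rule cspectrum_diag_similar[of X r A B, OF assms])
  then have "(SUP z \<in> cspectrum X A. ennreal (cmod z))
      = (SUP z \<in> cspectrum X B. ennreal (cmod (of_real r * z)))"
    by (simp only: image_image)
  also have "\<dots> = ennreal r * (SUP z \<in> cspectrum X B. ennreal (cmod z))"
    using assms(2) by (simp add: norm_mult ennreal_mult SUP_mult_left_ennreal)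
  finally show ?thesis
    using assms(2) by (simp add: spectral_radius_def enn2real_mult)
qed

lemma lin_op_cmult:
  assumes "lin_op T"
  shows "T (\<lambda>y. k * f y) = (\<lambda>x. k * T f x)"
  using assms[unfolded lin_op_def, rule_format, of k f 0 f] by simp

lemma Psi_scale_comp:
  assumes "lin_op (U t s)" and "lin_op (V t s)"
  shows "Psi U V t s (scale_comp a b \<phi>) = scale_comp a b (Psi U V t s \<phi>)"
  using lin_op_cmult[OF assms(1)] lin_op_cmult[OF assms(2)]
  by (simp add: Psi_def scale_comp_def)

lemma Fop_scale_comp:
  "Fop c \<alpha> \<beta> Mstar N p l t (scale_comp a b \<psi>) = scale_comp b a (Fop c \<alpha> \<beta> Mstar N p l t \<psi>)"
  by (simp add: Fop_def scale_comp_def fun_eq_iff)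

lemma Fop_vector_bias:
  assumes "l \<noteq> 0"
  shows "Fop c \<alpha> \<beta> Mstar N p l t \<psi> = scale_comp 1 (p / l) (Fop c \<alpha> \<beta> Mstar N 1 1 t \<psi>)"
  using assms by (simp add: Fop_def scale_comp_def fun_eq_iff)

lemma Lop_diag_scale:
  assumes "\<forall>t s. lin_op (U t s)" and "\<forall>t s. lin_op (V t s)"
  shows "Lop \<Omega> U V c \<alpha> \<beta> Mstar N p l (diag_scale a b v)
       = diag_scale b a (Lop \<Omega> U V c \<alpha> \<beta> Mstar N p l v)"
  using assms
  by (simp add: Lop_def diag_scale_def Fop_scale_comp Psi_scale_comp fun_eq_iff)
     (simp add: scale_comp_def zero_prod_def)

lemma Lop_vector_bias:
  assumes "\<forall>t s. lin_op (U t s)" and "\<forall>t s. lin_op (V t s)" and "l \<noteq> 0"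
  shows "Lop \<Omega> U V c \<alpha> \<beta> Mstar N p l v
       = diag_scale 1 (p / l) (Lop \<Omega> U V c \<alpha> \<beta> Mstar N 1 1 v)"
  using assms
  by (simp add: Lop_def diag_scale_def Fop_vector_bias[OF assms(3)] Psi_scale_comp fun_eq_iff)
     (simp add: scale_comp_def zero_prod_def)

lemma spectral_radius_Lop_vector_bias:
  assumes U: "\<forall>t s. lin_op (U t s)" and V: "\<forall>t s. lin_op (V t s)" and "0 < l" and "0 < p"
  shows "spectral_radius (Cw \<Omega> \<omega>) (Lop \<Omega> U V c \<alpha> \<beta> Mstar N p l)
       = spectral_radius (Cw \<Omega> \<omega>) (Lop \<Omega> U V c \<alpha> \<beta> Mstar N 1 1) / sqrt (l / p)"
proof -
  define r where "r = sqrt (p / l)"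
  have r: "r > 0" and rr: "r * r = p / l" and "l \<noteq> 0"
    using assms(3,4) by (simp_all add: r_def)
  have "Lop \<Omega> U V c \<alpha> \<beta> Mstar N p l (diag_scale 1 r u)
      = diag_scale r (r * r) (Lop \<Omega> U V c \<alpha> \<beta> Mstar N 1 1 u)" for u
    unfolding Lop_vector_bias[OF U V \<open>l \<noteq> 0\<close>] Lop_diag_scale[OF U V] diag_scale_mult rr
    by simp
  then have "spectral_radius (Cw \<Omega> \<omega>) (Lop \<Omega> U V c \<alpha> \<beta> Mstar N p l)
      = r * spectral_radius (Cw \<Omega> \<omega>) (Lop \<Omega> U V c \<alpha> \<beta> Mstar N 1 1)"
    by (intro spectral_radius_diag_similar Cw_diag_scale r)
  then show ?thesis
    using assms(3,4) by (simp add: r_def real_sqrt_divide field_simps)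
qed

theorem mainTheorem7:
  fixes \<Omega> :: "'a::euclidean_space set"
    and \<omega> c1 c2 \<alpha>1 \<alpha>2 :: real
    and \<beta> Mstar :: "real \<Rightarrow> 'a \<Rightarrow> real"
    and N :: "'a \<Rightarrow> real"
    and U1 U2 V :: "real \<Rightarrow> real \<Rightarrow> ('a \<Rightarrow> real) \<Rightarrow> ('a \<Rightarrow> real)"
    and R1 R2 R0 :: "real \<Rightarrow> real \<Rightarrow> real"
  assumes "bounded \<Omega>" and "open \<Omega>" and "connected \<Omega>" and "\<Omega> \<noteq> {}"
    and "\<omega> > 0" and "c1 > 0" and "c2 > 0" and "\<alpha>1 > 0" and "\<alpha>2 > 0"
    and "continuous_on (UNIV \<times> closure \<Omega>) (\<lambda>z. \<beta> (fst z) (snd z))"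
    and "\<forall>t x. \<beta> t x \<ge> 0" and "\<forall>t x. \<beta> (t + \<omega>) x = \<beta> t x"
    and "\<exists>t. \<exists>x\<in>closure \<Omega>. \<beta> t x \<noteq> 0"
    and "continuous_on (closure \<Omega>) N" and "\<forall>x\<in>closure \<Omega>. N x > 0"
    and "continuous_on (UNIV \<times> closure \<Omega>) (\<lambda>z. Mstar (fst z) (snd z))"
    and "\<forall>t. \<forall>x\<in>closure \<Omega>. Mstar t x > 0" and "\<forall>t x. Mstar (t + \<omega>) x = Mstar t x"
    and "\<forall>t s. lin_op (U1 t s)" and "\<forall>t s. lin_op (U2 t s)" and "\<forall>t s. lin_op (V t s)"
  defines "R1 \<equiv> (\<lambda>p l. spectral_radius (Cw \<Omega> \<omega>) (Lop \<Omega> U1 V c1 \<alpha>1 \<beta> Mstar N p l))"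
    and "R2 \<equiv> (\<lambda>p l. spectral_radius (Cw \<Omega> \<omega>) (Lop \<Omega> U2 V c2 \<alpha>2 \<beta> Mstar N p l))"
    and "R0 \<equiv> (\<lambda>p l. max (R1 p l) (R2 p l))"
  shows "(\<forall>p l p' l'. 0 < l \<and> l \<le> p \<and> 0 < l' \<and> l' \<le> p' \<and> l / p = l' / p' \<longrightarrow>
             R1 p l = R1 p' l' \<and> R2 p l = R2 p' l')
       \<and> (\<forall>p l. 0 < l \<and> l \<le> p \<longrightarrow>
             R1 p l = R1 1 1 / sqrt (l / p) \<and> R2 p l = R2 1 1 / sqrt (l / p)
             \<and> R0 p l = max (R1 1 1) (R2 1 1) / sqrt (l / p))
       \<and> (\<forall>p l p' l'. 0 < l \<and> l \<le> p \<and> 0 < l' \<and> l' \<le> p' \<and> l / p \<le> l' / p' \<longrightarrow>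
             R0 p' l' \<le> R0 p l)"
proof -
  \<comment> \<open>kept opaque, so that the rewrite rules R1 and R2 below do not loop on R1 1 1\<close>
  define \<rho>1 \<rho>2 where "\<rho>1 = R1 1 1" and "\<rho>2 = R2 1 1"
  have R1: "R1 p l = \<rho>1 / sqrt (l / p)" if "0 < l" "l \<le> p" for p l
    unfolding R1_def \<rho>1_def
    using spectral_radius_Lop_vector_bias[OF assms(19,21) that(1) order.strict_trans2[OF that]]
    by simp
  have R2: "R2 p l = \<rho>2 / sqrt (l / p)" if "0 < l" "l \<le> p" for p l
    unfolding R2_def \<rho>2_def
    using spectral_radius_Lop_vector_bias[OF assms(20,21) that(1) order.strict_trans2[OF that]]
    by simp
  have R0: "R0 p l = max \<rho>1 \<rho>2 / sqrt (l / p)" if "0 < l" "l \<le> p" for p l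
    using R1[OF that] R2[OF that] that by (simp add: R0_def max_divide_distrib_right)
  have "0 \<le> max \<rho>1 \<rho>2"
    by (simp add: \<rho>1_def R1_def spectral_radius_def le_max_iff_disj)
  then have R0_antimono: "R0 p' l' \<le> R0 p l"
    if "0 < l" "l \<le> p" "0 < l'" "l' \<le> p'" "l / p \<le> l' / p'" for p l p' l'
    using that by (simp add: R0 divide_left_mono real_sqrt_le_mono)
  show ?thesis
    using R0 R1 R2 R0_antimono by auto
qed

end
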